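(* For every complex $s$ with $\Re(s)>4$, \[\sum_{k=1}^\infty k^2\,\zeta(s,2k)=\tfrac{1}{24}\Big\{(3\cdot 2^{1-s}-1) \zeta(s-1)+6\cdot 2^{1-s} \zeta(s-2)+\zeta(s-3)\Big\}.\]
   Context: $\zeta(s,\alpha)=\sum_{n=0}^\infty (n+\alpha)^{-s}$ denotes the Hurwitz zeta function ($\Re(s)>1$, $\alpha>0$), and $\zeta(s)=\zeta(s,1)$ is the Riemann zeta function. *)

theory Defs
  imports "HOL-Analysis.Analysis"
begin

text \<open>Hurwitz zeta function, defined by its series (meaningful for Re s > 1, a > 0).\<close>
definition hurwitz_zeta :: "complex \<Rightarrow> real \<Rightarrow> complex" where
  "hurwitz_zeta s a = (\<Sum>n. complex_of_real (real n + a) powr (- s))"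

definition riemann_zeta :: "complex \<Rightarrow> complex" where
  "riemann_zeta s = hurwitz_zeta s 1"

end

theory Submission
  imports Defs
begin

text \<open>Writing each \<open>\<zeta>(s, 2k)\<close> as \<open>\<Sum>(m \<ge> 2k) m^(-s)\<close> turns the left-hand side into a double
  series which converges absolutely for \<open>Re s > 4\<close>. Summing over \<open>k\<close> first gives the Dirichlet
  series with coefficients \<open>T(m) = \<Sum>(k \<le> m/2) k^2\<close>, and the identity
  \<open>24 T(m) = m^3 - m + [m even] (3 m^2 + 3 m)\<close> splits it into
  \<open>\<zeta>(s-3) - \<zeta>(s-1) + 3 \<cdot> 2^(2-s) \<zeta>(s-2) + 3 \<cdot> 2^(1-s) \<zeta>(s-1)\<close>.\<close>

lemma sum_squares_lessThan: "6 * (\<Sum>k<j. (Suc k)^2) = j * (j + 1) * (2 * j + 1)"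
  by (induction j) (auto simp: algebra_simps power2_eq_square)

lemma sum_squares_half:
  "24 * (of_nat (\<Sum>k<m div 2. (Suc k)^2) :: 'a :: comm_ring_1) =
     of_nat m ^ 3 - of_nat m + (if even m then 3 * of_nat m ^ 2 + 3 * of_nat m else 0)"
proof -
  obtain j where m: "m = 2 * j \<or> m = 2 * j + 1"
    by (metis dvd_mult_div_cancel odd_two_times_div_two_succ)
  then have "m div 2 = j" by auto
  have "of_nat (6 * (\<Sum>k<j. (Suc k)^2)) = (of_nat (j * (j + 1) * (2 * j + 1)) :: 'a)"
    by (simp only: sum_squares_lessThan)
  then have "6 * of_nat (\<Sum>k<m div 2. (Suc k)^2) =
      (of_nat j * (of_nat j + 1) * (2 * of_nat j + 1) :: 'a)"
    unfolding \<open>m div 2 = j\<close> by (simp only: of_nat_mult of_nat_add of_nat_1 of_nat_numeral)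
  moreover have "24 * (of_nat (\<Sum>k<m div 2. (Suc k)^2) :: 'a) =
      4 * (6 * of_nat (\<Sum>k<m div 2. (Suc k)^2))"
    by simp
  ultimately show ?thesis
    using m by (elim disjE) (simp_all add: algebra_simps power2_eq_square power3_eq_cube)
qed

lemma sum_squares_half_le_cube: "(\<Sum>k<n div 2. real (Suc k)^2) \<le> real n ^ 3"
proof -
  have "(\<Sum>k<n div 2. real (Suc k)^2) \<le> (\<Sum>k<n div 2. real n ^ 2)"
    by (intro sum_mono power_mono) (use div_le_dividend[of n 2] in auto)
  also have "\<dots> = real (n div 2) * real n ^ 2" by simp
  also have "\<dots> \<le> real n * real n ^ 2"
    by (intro mult_right_mono) (auto simp: div_le_dividend)
  also have "\<dots> = real n ^ 3" by (simp add: power3_eq_cube power2_eq_square)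
  finally show ?thesis .
qed

lemma powr_minus_diff_of_nat:
  fixes x s :: complex
  assumes "x \<noteq> 0"
  shows "x powr (-(s - of_nat j)) = x ^ j * x powr (-s)"
proof -
  have "x powr (-(s - of_nat j)) = x powr (-s) * x powr (of_nat j)"
    by (metis powr_add minus_diff_eq diff_conv_add_uminus add.commute)
  also have "\<dots> = x ^ j * x powr (-s)" using assms by (simp add: powr_nat')
  finally show ?thesis .
qed

lemma has_sum_diff:
  fixes f g :: "'a \<Rightarrow> 'b :: topological_ab_group_add"
  assumes "(f has_sum a) A" "(g has_sum b) A"
  shows "((\<lambda>x. f x - g x) has_sum (a - b)) A"
  using has_sum_add[OF assms(1) has_sum_uminus[where f = g and a = "-b", THEN iffD2]] assms(2) by simp

lemma riemann_zeta_has_sum: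
  assumes "Re z > 1"
  shows "((\<lambda>m::nat. complex_of_real (real m) powr (-z)) has_sum riemann_zeta z) UNIV"
proof -
  let ?f = "\<lambda>m::nat. complex_of_real (real m) powr (-z)"
  \<comment> \<open>the term \<open>m = 0\<close> is \<open>0 powr (-z) = 0\<close>, so the sum may run over all of \<open>UNIV\<close>\<close>
  have norm_f: "norm (?f m) = real m powr (- Re z)" for m
    by (subst norm_powr_real_powr) auto
  have summable_norm: "summable (\<lambda>m. norm (?f m))"
    unfolding norm_f using summable_real_powr_iff[of "-Re z"] assms by simp
  then have "summable (\<lambda>n. norm (?f (Suc n)))"
    by (rule summable_Suc_iff[where f = "\<lambda>m. norm (?f m)", THEN iffD2])
  then have "summable (\<lambda>n. ?f (Suc n))"
    by (rule summable_norm_cancel)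
  moreover have shift: "(\<lambda>n. ?f (Suc n)) = (\<lambda>n. complex_of_real (real n + 1) powr (-z))"
    by (simp add: add.commute)
  ultimately have "(\<lambda>n. ?f (Suc n)) sums riemann_zeta z"
    unfolding shift riemann_zeta_def hurwitz_zeta_def by (simp add: summable_sums)
  then have "?f sums (riemann_zeta z + ?f 0)"
    by (rule sums_Suc)
  then have "?f sums riemann_zeta z"
    by simp
  then show ?thesis
    by (rule norm_summable_imp_has_sum[OF summable_norm])
qed

lemma riemann_zeta_even_has_sum:
  assumes "Re z > 1"
  shows "((\<lambda>m::nat. if even m then complex_of_real (real m) powr (-z) else 0)
           has_sum (2 powr (-z) * riemann_zeta z)) UNIV"
proof -
  have double: "2 powr (-z) * complex_of_real (real j) powr (-z) =
      complex_of_real (real (2 * j)) powr (-z)" for j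
    by (simp del: of_real_of_nat_eq) (subst powr_times_real; simp)
  have "((\<lambda>j. complex_of_real (real (2 * j)) powr (-z)) has_sum (2 powr (-z) * riemann_zeta z)) UNIV"
    using has_sum_cmult_right[OF riemann_zeta_has_sum[OF assms], of "2 powr (-z)"]
    by (simp only: double)
  then have evens: "((\<lambda>m. complex_of_real (real m) powr (-z)) has_sum (2 powr (-z) * riemann_zeta z))
      {m. even m}"
    by (subst has_sum_reindex_bij_witness[of UNIV "\<lambda>m. m div 2" "\<lambda>j. 2 * j" "{m. even m}",
          symmetric]) auto
  show ?thesis
    by (rule has_sum_cong_neutral[where T = "{m. even m}" and S = UNIV, THEN iffD2]) (use evens in auto)
qed

lemma hurwitz_zeta_of_nat_has_sum:
  assumes "Re s > 1"
  shows "((\<lambda>m::nat. complex_of_real (real m) powr (-s)) has_sum hurwitz_zeta s (real c)) {c..}"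
proof -
  let ?P = "\<lambda>m::nat. complex_of_real (real m) powr (-s)"
  have range_shift: "{c..} = range (\<lambda>n. n + c)"
  proof (intro equalityI subsetI)
    fix x assume "x \<in> {c..}"
    then have "x = (x - c) + c" by simp
    then show "x \<in> range (\<lambda>n. n + c)" by blast
  qed auto
  have "?P summable_on {c..}"
    by (rule summable_on_subset_banach[OF has_sum_imp_summable[OF riemann_zeta_has_sum[OF assms]]]) simp
  then have "(\<lambda>n. ?P (n + c)) summable_on UNIV"
    unfolding range_shift by (subst (asm) summable_on_reindex) (auto simp: inj_on_def o_def)
  then have shifted: "((\<lambda>n. ?P (n + c)) has_sum infsum (\<lambda>n. ?P (n + c)) UNIV) UNIV"
    by (rule has_sum_infsum)
  then have "infsum (\<lambda>n. ?P (n + c)) UNIV = hurwitz_zeta s (real c)"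
    unfolding hurwitz_zeta_def by (auto dest!: has_sum_imp_sums simp: sums_iff)
  with shifted show ?thesis
    unfolding range_shift by (subst has_sum_reindex) (auto simp: inj_on_def o_def)
qed

lemma sum_squares_half_dirichlet_has_sum:
  assumes "Re s > 4"
  shows "((\<lambda>m::nat. of_nat (\<Sum>k<m div 2. (Suc k)^2) * complex_of_real (real m) powr (-s))
    has_sum ((1/24) * ((3 * 2 powr (1 - s) - 1) * riemann_zeta (s - 1)
              + 6 * 2 powr (1 - s) * riemann_zeta (s - 2)
              + riemann_zeta (s - 3)))) UNIV"
proof -
  define Q where "Q z m = complex_of_real (real m) powr (-z)" for z and m :: nat
  define E where "E z m = (if even m then Q z m else 0)" for z and m :: nat
  have coefficients: "of_nat (\<Sum>k<m div 2. (Suc k)^2) * Q s m =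
      (1/24) * (Q (s - 3) m - Q (s - 1) m + 3 * E (s - 2) m + 3 * E (s - 1) m)" for m
  proof (cases "m = 0")
    case False
    let ?x = "complex_of_real (real m)"
    have "?x \<noteq> 0" using False by simp
    from powr_minus_diff_of_nat[OF this, of s] have shift: "Q (s - of_nat j) m = ?x ^ j * Q s m" for j
      by (simp add: Q_def)
    have "of_nat (\<Sum>k<m div 2. (Suc k)^2) * Q s m =
        (1/24) * ((24 * of_nat (\<Sum>k<m div 2. (Suc k)^2)) * Q s m)"
      by simp
    also have "\<dots> = (1/24) * ((?x ^ 3 - ?x + (if even m then 3 * ?x ^ 2 + 3 * ?x else 0)) * Q s m)"
      by (simp only: sum_squares_half of_real_of_nat_eq)
    also have "\<dots> = (1/24) * (Q (s - 3) m - Q (s - 1) m + 3 * E (s - 2) m + 3 * E (s - 1) m)"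
      using shift[of 1] shift[of 2] shift[of 3]
      by (simp add: E_def algebra_simps)
    finally show ?thesis .
  qed (simp add: Q_def E_def)
  have dirichlet: "((\<lambda>m. of_nat (\<Sum>k<m div 2. (Suc k)^2) * Q s m) has_sum
      (1/24) * (riemann_zeta (s - 3) - riemann_zeta (s - 1) + 3 * (2 powr (-(s - 2)) * riemann_zeta (s - 2))
        + 3 * (2 powr (-(s - 1)) * riemann_zeta (s - 1)))) UNIV"
    unfolding coefficients unfolding Q_def E_def using assms
    by (intro has_sum_cmult_right has_sum_add has_sum_diff riemann_zeta_has_sum
        riemann_zeta_even_has_sum) auto
  have closed_form: "(1/24) * (riemann_zeta (s - 3) - riemann_zeta (s - 1)
        + 3 * (2 powr (-(s - 2)) * riemann_zeta (s - 2)) + 3 * (2 powr (-(s - 1)) * riemann_zeta (s - 1))) =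
      (1/24) * ((3 * 2 powr (1 - s) - 1) * riemann_zeta (s - 1)
        + 6 * 2 powr (1 - s) * riemann_zeta (s - 2) + riemann_zeta (s - 3))"
  proof -
    have two: "(2::complex) powr (-(s - 2)) = 2 * 2 powr (1 - s)"
      using powr_add[of "2::complex" "1 - s" 1] by (simp add: add.commute)
    have one: "(2::complex) powr (-(s - 1)) = 2 powr (1 - s)"
      by simp
    show ?thesis
      unfolding one two by (simp add: algebra_simps)
  qed
  show ?thesis
    using dirichlet unfolding closed_form Q_def .
qed

lemma squares_times_powr_summable_on:
  assumes "Re s > 4"
  shows "(\<lambda>(m, k). of_nat (Suc k)^2 * complex_of_real (real m) powr (-s))
           summable_on (SIGMA m:UNIV. {..<m div 2})"
proof (rule abs_summable_summable)
  let ?g = "\<lambda>m::nat. (\<Sum>k<m div 2. real (Suc k)^2) * real m powr (- Re s)"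
  have "summable ?g"
  proof (rule summable_comparison_test'[where N = 1])
    show "summable (\<lambda>m. real m powr (3 - Re s))"
      using summable_real_powr_iff[of "3 - Re s"] assms by simp
  next
    fix n :: nat
    assume "n \<ge> 1"
    then have "real n powr (3 - Re s) = real n ^ 3 * real n powr (- Re s)"
      by (simp add: powr_diff powr_minus_divide powr_realpow')
    then show "norm (?g n) \<le> real n powr (3 - Re s)"
      using sum_squares_half_le_cube[of n] by (simp add: mult_right_mono sum_nonneg)
  qed
  then have "?g summable_on UNIV"
    by (subst summable_on_UNIV_nonneg_real_iff) (auto intro!: mult_nonneg_nonneg sum_nonneg)
  then show "(\<lambda>x. norm ((\<lambda>(m, k). of_nat (Suc k)^2 * complex_of_real (real m) powr (-s)) x))
      summable_on (SIGMA m:UNIV. {..<m div 2})"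
    by (rule summable_on_SigmaI[rotated])
      (auto simp: norm_mult norm_power norm_powr_real_powr sum_distrib_right simp del: of_nat_Suc
        intro!: has_sum_finiteI)
qed

theorem mainTheorem11:
  fixes s :: complex
  assumes "Re s > 4"
  shows "(\<lambda>k. (of_nat (Suc k))^2 * hurwitz_zeta s (2 * real (Suc k))) sums
    ((1/24) * ((3 * 2 powr (1 - s) - 1) * riemann_zeta (s - 1)
              + 6 * 2 powr (1 - s) * riemann_zeta (s - 2)
              + riemann_zeta (s - 3)))"
proof -
  let ?P = "\<lambda>m::nat. complex_of_real (real m) powr (-s)"
  obtain S where pairs: "((\<lambda>(m, k). of_nat (Suc k)^2 * ?P m) has_sum S) (SIGMA m:UNIV. {..<m div 2})"
    using squares_times_powr_summable_on[OF assms] by (auto simp: summable_on_def)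
  have "((\<lambda>m. of_nat (\<Sum>k<m div 2. (Suc k)^2) * ?P m) has_sum S) UNIV"
    by (rule has_sum_SigmaD[OF pairs]) (auto simp: sum_distrib_right intro!: has_sum_finiteI)
  then have S: "S = (1/24) * ((3 * 2 powr (1 - s) - 1) * riemann_zeta (s - 1)
              + 6 * 2 powr (1 - s) * riemann_zeta (s - 2) + riemann_zeta (s - 3))"
    using sum_squares_half_dirichlet_has_sum[OF assms] by (rule has_sum_unique)
  let ?G = "\<lambda>(k, m). of_nat (Suc k)^2 * ?P m"
  have swapped: "(?G has_sum S) (SIGMA k:UNIV. {2 * k + 2..})"
    using pairs by (subst has_sum_reindex_bij_witness[where i = prod.swap and j = prod.swap]) auto
  have "((\<lambda>m. ?G (k, m)) has_sum of_nat (Suc k)^2 * hurwitz_zeta s (2 * real (Suc k))) {2 * k + 2..}" for k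
    using has_sum_cmult_right[OF hurwitz_zeta_of_nat_has_sum[of s "2 * k + 2"]] assms by simp
  from has_sum_SigmaD[OF swapped this] show ?thesis
    unfolding S by (rule has_sum_imp_sums)
qed

end
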